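(* There is a universal constant $C>0$ such that the following holds in the standing setting. For $\varepsilon>0$ let $N_\delta=\max\{k\in\mathbb{N}:\lambda_k>\delta\}$ and $$\delta^\ast=\min\Big\{\delta \;\Big|\; \delta>\nu(\Omega)\varepsilon^2,\ N_\delta\ge \frac{\lambda_1\exp\{-\frac{1}{4C}\mathcal{E}(\delta,\{\lambda_i\}_{i=1}^\infty)\}}{\big(\delta^{1/2}-\nu(\Omega)^{1/2}\varepsilon\big)^2}\Big\}.$$ Then $$\mathcal{H}^{\rm ext}\Big(\frac{\varepsilon}{2}, B_{\mathcal{H}_K}, C(\Omega)\Big)\ge \frac14\,\mathcal{E}(\delta^\ast,\{\lambda_i\}_{i=1}^\infty).$$
   Context: Standing setting: $\Omega\subseteq\mathbb{R}^n$ compact, $\nu$ a finite Borel measure on $\Omega$ (total mass $\nu(\Omega)$), $K:\Omega\times\Omega\to\mathbb{R}$ continuous, symmetric, positive semidefinite; $O_K[\phi](x)=\int_\Omega K(x,y)\phi(y)\,d\nu(y)$ on $L_2(\nu)$, with an orthonormal basis $\{\phi_i\}$ of $L_2(\nu)$ of continuous eigenfunctions, $O_K\phi_i=\lambda_i\phi_i$, $\lambda_1\ge\lambda_2\ge\dots>0$, and $K(x,y)=\sum_i\lambda_i\phi_i(x)\phi_i(y)$ uniformly. $\mathcal{H}_K$ is the RKHS of $K$, equal to $\{\sum a_i\phi_i:\sum a_i^2/\lambda_i<\infty\}$ with $\langle\sum a_i\phi_i,\sum b_i\phi_i\rangle_{\mathcal{H}_K}=\sum a_ib_i/\lambda_i$.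 $C(\Omega)$ carries the sup norm; $B_X$ is the open unit ball of $X$. $\mathcal{H}^{\rm ext}(\varepsilon,A,X)$ is the natural logarithm of the minimal number of balls $c+\varepsilon B_X$, $c\in X$, covering $A$. $\mathcal{E}(\varepsilon,\{\lambda_i\}_{i=1}^N)=\sum_{i\le N,\lambda_i>\varepsilon}\ln(\lambda_i/\varepsilon)$. *)

theory Defs
  imports "HOL-Analysis.Analysis"
begin

text \<open>Points of \<open>\<real>\<^sup>n\<close> are encoded as functions \<open>nat \<Rightarrow> real\<close> vanishing at all
  indices \<open>\<ge> n\<close>, so that the dimension \<open>n\<close> can be quantified inside the formula
  (the constant is universal, independent of the dimension).
  Eigenvalues/eigenfunctions are indexed from 0, i.e. \<open>lam 0\<close> is \<open>\<lambda>\<^sub>1\<close>.\<close>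

definition kernel_setting ::
  "nat \<Rightarrow> (nat \<Rightarrow> real) set \<Rightarrow> (nat \<Rightarrow> real) measure \<Rightarrow>
   ((nat \<Rightarrow> real) \<Rightarrow> (nat \<Rightarrow> real) \<Rightarrow> real) \<Rightarrow>
   (nat \<Rightarrow> (nat \<Rightarrow> real) \<Rightarrow> real) \<Rightarrow> (nat \<Rightarrow> real) \<Rightarrow> bool" where
  "kernel_setting n \<Omega> \<nu> K \<phi> lam \<longleftrightarrow>
     \<Omega> \<subseteq> {x. \<forall>i\<ge>n. x i = 0} \<and> compact \<Omega> \<and>
     sets \<nu> = sets (restrict_space borel \<Omega>) \<and> finite_measure \<nu> \<and>
     continuous_on (\<Omega> \<times> \<Omega>) (\<lambda>(x, y). K x y) \<and>
     (\<forall>x\<in>\<Omega>. \<forall>y\<in>\<Omega>. K x y = K y x) \<and>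
     (\<forall>xs c. set xs \<subseteq> \<Omega> \<longrightarrow>
        0 \<le> (\<Sum>i<length xs. \<Sum>j<length xs. c i * c j * K (xs ! i) (xs ! j))) \<and>
     (\<forall>i. continuous_on \<Omega> (\<phi> i)) \<and>
     (\<forall>i j. (\<integral>x. \<phi> i x * \<phi> j x \<partial>\<nu>) = (if i = j then 1 else 0)) \<and>
     (\<forall>f \<in> borel_measurable \<nu>. integrable \<nu> (\<lambda>x. (f x)\<^sup>2) \<and>
          (\<forall>i. (\<integral>x. f x * \<phi> i x \<partial>\<nu>) = 0) \<longrightarrow> (AE x in \<nu>. f x = 0)) \<and>
     (\<forall>i. AE x in \<nu>. (\<integral>y. K x y * \<phi> i y \<partial>\<nu>) = lam i * \<phi> i x) \<and>
     (\<forall>i j. i \<le> j \<longrightarrow> lam j \<le> lam i) \<and> (\<forall>i. 0 < lam i) \<and>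
     uniform_limit (\<Omega> \<times> \<Omega>)
       (\<lambda>N (x, y). \<Sum>i<N. lam i * \<phi> i x * \<phi> i y) (\<lambda>(x, y). K x y) sequentially"

definition rkhs_ball ::
  "'a set \<Rightarrow> (nat \<Rightarrow> 'a \<Rightarrow> real) \<Rightarrow> (nat \<Rightarrow> real) \<Rightarrow> ('a \<Rightarrow> real) set" where
  "rkhs_ball \<Omega> \<phi> lam = {f. \<exists>a. summable (\<lambda>i. (a i)\<^sup>2 / lam i) \<and>
      (\<Sum>i. (a i)\<^sup>2 / lam i) < 1 \<and> (\<forall>x\<in>\<Omega>. (\<lambda>i. a i * \<phi> i x) sums f x)}"

definition sup_dist :: "'a set \<Rightarrow> ('a \<Rightarrow> real) \<Rightarrow> ('a \<Rightarrow> real) \<Rightarrow> real" where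
  "sup_dist \<Omega> f g = Sup ((\<lambda>x. \<bar>f x - g x\<bar>) ` \<Omega>)"

definition ext_cover ::
  "'a::topological_space set \<Rightarrow> real \<Rightarrow> ('a \<Rightarrow> real) set \<Rightarrow> ('a \<Rightarrow> real) set \<Rightarrow> bool" where
  "ext_cover \<Omega> \<epsilon> A Cs \<longleftrightarrow> (\<forall>c\<in>Cs. continuous_on \<Omega> c) \<and>
      (\<forall>f\<in>A. \<exists>c\<in>Cs. sup_dist \<Omega> f c < \<epsilon>)"

definition H_ext :: "real \<Rightarrow> ('a::topological_space \<Rightarrow> real) set \<Rightarrow> 'a set \<Rightarrow> ereal" where
  "H_ext \<epsilon> A \<Omega> =
     (if \<exists>Cs. finite Cs \<and> ext_cover \<Omega> \<epsilon> A Cs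
      then ereal (ln (real (LEAST m. \<exists>Cs. finite Cs \<and> card Cs = m \<and> ext_cover \<Omega> \<epsilon> A Cs)))
      else \<infinity>)"

definition entropyE :: "real \<Rightarrow> (nat \<Rightarrow> real) \<Rightarrow> real" where
  "entropyE \<epsilon> lam = (\<Sum>i\<in>{i. lam i > \<epsilon>}. ln (lam i / \<epsilon>))"

text \<open>\<open>N\<^sub>\<delta> = max{k : \<lambda>\<^sub>k > \<delta>}\<close> (1-based), i.e. the number of eigenvalues exceeding \<open>\<delta>\<close>.\<close>
definition Ndelta :: "(nat \<Rightarrow> real) \<Rightarrow> real \<Rightarrow> nat" where
  "Ndelta lam \<delta> = card {k. lam k > \<delta>}"

definition delta_set :: "real \<Rightarrow> 'a measure \<Rightarrow> real \<Rightarrow> (nat \<Rightarrow> real) \<Rightarrow> real set" where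
  "delta_set C \<nu> \<epsilon> lam = {\<delta>. \<delta> > measure \<nu> (space \<nu>) * \<epsilon>\<^sup>2 \<and>
      real (Ndelta lam \<delta>) \<ge> lam 0 * exp (- (1 / (4 * C)) * entropyE \<delta> lam)
        / (sqrt \<delta> - sqrt (measure \<nu> (space \<nu>)) * \<epsilon>)\<^sup>2}"

end

theory Submission
  imports Defs
begin

text \<open>Centres covering the RKHS ball within sup-distance \<open>\<epsilon>/2\<close> induce, through their Fourier
  coefficients \<open>\<langle>c, \<phi>\<^sub>i\<rangle>\<close> on the finite index set \<open>J = {i. \<lambda>\<^sub>i > \<delta>}\<close>, a cover of the ellipsoid
  \<open>\<Sum>\<^sub>i\<^sub>\<in>\<^sub>J a\<^sub>i\<^sup>2 / \<lambda>\<^sub>i < 1\<close> in \<open>\<real>\<^sup>J\<close> by Euclidean balls of radius \<open>sqrt(\<nu>(\<Omega>)) \<epsilon>/2\<close>: by Bessel's inequality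
  the coefficient distance is at most the \<open>L\<^sub>2(\<nu>)\<close> distance, which is at most \<open>sqrt(\<nu>(\<Omega>))\<close> times
  the sup distance. Comparing volumes in \<open>\<real>\<^sup>J\<close> yields at least \<open>\<Prod>\<^sub>i\<^sub>\<in>\<^sub>J sqrt(\<lambda>\<^sub>i / (\<nu>(\<Omega>) \<epsilon>\<^sup>2))\<close>
  centres, i.e. entropy at least \<open>\<Sum>\<^sub>i\<^sub>\<in>\<^sub>J ln(\<lambda>\<^sub>i / \<delta>) / 2\<close> once \<open>\<delta> > \<nu>(\<Omega>) \<epsilon>\<^sup>2\<close>.\<close>

lemma emeasure_lborel_affine_preimage:
  fixes a b :: real
  assumes "a > 0" "A \<in> sets borel"
  shows "emeasure lborel A = ennreal a * emeasure lborel ((\<lambda>t. a * t + b) -` A)"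
proof -
  have "emeasure lborel A = emeasure (density (distr lborel borel (\<lambda>x. b + a * x)) (\<lambda>_. ennreal \<bar>a\<bar>)) A"
    using lborel_real_affine[of a b] assms by simp
  also have "\<dots> = ennreal a * emeasure (distr lborel borel (\<lambda>x. b + a * x)) A"
    using assms by (subst emeasure_density_const) auto
  also have "\<dots> = ennreal a * emeasure lborel ((\<lambda>t. a * t + b) -` A)"
    using assms by (subst emeasure_distr) (auto simp: add.commute)
  finally show ?thesis .
qed

lemma emeasure_PiM_lborel_affine_preimage:
  fixes I :: "'i set" and \<alpha> \<beta> :: "'i \<Rightarrow> real"
  assumes I: "finite I" and pos: "\<And>i. i \<in> I \<Longrightarrow> \<alpha> i > 0"
    and A: "A \<in> sets (PiM I (\<lambda>_. lborel))"
  shows "emeasure (PiM I (\<lambda>_. lborel)) A = (\<Prod>i\<in>I. ennreal (\<alpha> i)) *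
     emeasure (PiM I (\<lambda>_. lborel))
       ((\<lambda>x. \<lambda>i\<in>I. \<alpha> i * x i + \<beta> i) -` A \<inter> space (PiM I (\<lambda>_. lborel)))"
proof -
  interpret product_sigma_finite "\<lambda>_. lborel" by standard
  define \<mu> where "\<mu> = PiM I (\<lambda>_. lborel::real measure)"
  define T where "T = (\<lambda>x. \<lambda>i\<in>I. \<alpha> i * x i + \<beta> i)"
  have T: "T \<in> measurable \<mu> \<mu>"
    unfolding T_def \<mu>_def by measurable
  define P where "P = density (distr \<mu> \<mu> T) (\<lambda>_. \<Prod>i\<in>I. ennreal (\<alpha> i))"
  have "P = \<mu>"
    unfolding \<mu>_def
  proof (rule PiM_eqI[OF I])
    show "sets P = sets (PiM I (\<lambda>_. lborel))" by (simp add: P_def \<mu>_def)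
  next
    fix B assume B: "\<And>i. i \<in> I \<Longrightarrow> B i \<in> sets (lborel::real measure)"
    have "Pi\<^sub>E I B \<in> sets \<mu>" unfolding \<mu>_def using B by (intro sets_PiM_I_finite I) auto
    then have "emeasure P (Pi\<^sub>E I B) = (\<Prod>i\<in>I. ennreal (\<alpha> i)) * emeasure \<mu> (T -` Pi\<^sub>E I B \<inter> space \<mu>)"
      unfolding P_def using T by (simp add: emeasure_density_const emeasure_distr)
    also have "T -` Pi\<^sub>E I B \<inter> space \<mu> = Pi\<^sub>E I (\<lambda>i. (\<lambda>t. \<alpha> i * t + \<beta> i) -` B i)"
      by (auto simp: T_def \<mu>_def space_PiM PiE_def Pi_def extensional_def)
    also have "emeasure \<mu> \<dots> = (\<Prod>i\<in>I. emeasure lborel ((\<lambda>t. \<alpha> i * t + \<beta> i) -` B i))"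
    proof -
      have "(\<lambda>t. \<alpha> i * t + \<beta> i) -` B i \<in> sets lborel" if "i \<in> I" for i
        using measurable_sets[of "\<lambda>t. \<alpha> i * t + \<beta> i" borel borel "B i"] B[OF that] by simp
      then show ?thesis unfolding \<mu>_def by (simp add: emeasure_PiM[OF I])
    qed
    also have "(\<Prod>i\<in>I. ennreal (\<alpha> i)) * \<dots> = (\<Prod>i\<in>I. emeasure lborel (B i))"
      using B pos by (simp add: prod.distrib[symmetric])
        (intro prod.cong refl emeasure_lborel_affine_preimage[symmetric], auto)
    finally show "emeasure P (Pi\<^sub>E I B) = (\<Prod>i\<in>I. emeasure lborel (B i))" .
  qed
  then have "emeasure \<mu> A = emeasure P A" by simp
  also have "\<dots> = (\<Prod>i\<in>I. ennreal (\<alpha> i)) * emeasure \<mu> (T -` A \<inter> space \<mu>)"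
    unfolding P_def using A T by (simp add: emeasure_density_const emeasure_distr \<mu>_def)
  finally show ?thesis unfolding \<mu>_def T_def .
qed

lemma emeasure_PiM_lborel_cball:
  fixes c :: "'i \<Rightarrow> real"
  assumes I: "finite I" and r: "r > 0"
  shows "emeasure (PiM I (\<lambda>_. lborel))
      ({x. sqrt (\<Sum>i\<in>I. (x i - c i)\<^sup>2) \<le> r} \<inter> space (PiM I (\<lambda>_. lborel)))
    = ennreal (unit_ball_vol (card I) * r ^ card I)"
proof -
  define \<mu> where "\<mu> = PiM I (\<lambda>_. lborel::real measure)"
  define B where "B = {x. sqrt (\<Sum>i\<in>I. (x i)\<^sup>2) \<le> r} \<inter> space \<mu>"
  have "B \<in> sets \<mu>"
    unfolding B_def \<mu>_def by measurable
  then have "emeasure \<mu> B = (\<Prod>i\<in>I. ennreal 1) *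
      emeasure \<mu> ((\<lambda>x. \<lambda>i\<in>I. 1 * x i + - c i) -` B \<inter> space \<mu>)"
    unfolding \<mu>_def by (intro emeasure_PiM_lborel_affine_preimage I) auto
  also have "(\<lambda>x. \<lambda>i\<in>I. 1 * x i + - c i) -` B \<inter> space \<mu>
      = {x. sqrt (\<Sum>i\<in>I. (x i - c i)\<^sup>2) \<le> r} \<inter> space \<mu>"
    by (auto simp: B_def \<mu>_def space_PiM PiE_def extensional_def)
  finally show ?thesis
    using emeasure_cball_aux[OF I r] by (simp add: B_def \<mu>_def)
qed

lemma emeasure_PiM_lborel_ellipsoid:
  fixes lam :: "'i \<Rightarrow> real"
  assumes I: "finite I" and lam: "\<And>i. i \<in> I \<Longrightarrow> lam i > 0" and \<rho>: "\<rho> > 0"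
  shows "emeasure (PiM I (\<lambda>_. lborel))
      ({x. (\<Sum>i\<in>I. (x i)\<^sup>2 / lam i) \<le> \<rho>\<^sup>2} \<inter> space (PiM I (\<lambda>_. lborel)))
    = ennreal ((\<Prod>i\<in>I. sqrt (lam i)) * unit_ball_vol (card I) * \<rho> ^ card I)"
proof -
  define \<mu> where "\<mu> = PiM I (\<lambda>_. lborel::real measure)"
  define B where "B = {x. sqrt (\<Sum>i\<in>I. (x i)\<^sup>2) \<le> \<rho>} \<inter> space \<mu>"
  define E where "E = {x. (\<Sum>i\<in>I. (x i)\<^sup>2 / lam i) \<le> \<rho>\<^sup>2} \<inter> space \<mu>"
  define s where "s = (\<Prod>i\<in>I. sqrt (lam i))"
  have s: "s > 0" unfolding s_def using lam by (intro prod_pos) auto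
  have "B \<in> sets \<mu>"
    unfolding B_def \<mu>_def by measurable
  then have "emeasure \<mu> B = (\<Prod>i\<in>I. ennreal (1 / sqrt (lam i))) *
      emeasure \<mu> ((\<lambda>x. \<lambda>i\<in>I. 1 / sqrt (lam i) * x i + 0) -` B \<inter> space \<mu>)"
    unfolding \<mu>_def using lam by (intro emeasure_PiM_lborel_affine_preimage I) auto
  also have "(\<lambda>x. \<lambda>i\<in>I. 1 / sqrt (lam i) * x i + 0) -` B \<inter> space \<mu> = E"
  proof -
    have "(\<Sum>i\<in>I. (1 / sqrt (lam i) * x i)\<^sup>2) = (\<Sum>i\<in>I. (x i)\<^sup>2 / lam i)" for x
      using lam by (intro sum.cong refl) (simp add: power_mult_distrib power_divide less_imp_le)
    then show ?thesis
      using \<rho> by (auto simp: B_def E_def \<mu>_def space_PiM PiE_def extensional_def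
          real_sqrt_le_iff' sum_nonneg)
  qed
  also have "(\<Prod>i\<in>I. ennreal (1 / sqrt (lam i))) = ennreal (1 / s)"
    using lam by (simp add: s_def prod_ennreal prod_dividef less_imp_le)
  finally have B_eq: "emeasure \<mu> B = ennreal (1 / s) * emeasure \<mu> E" .
  have "ennreal s * ennreal (1 / s) = 1"
    using s by (simp add: ennreal_mult[symmetric])
  then have "emeasure \<mu> E = ennreal s * emeasure \<mu> B"
    by (simp add: B_eq mult.assoc[symmetric])
  then show ?thesis
    using emeasure_cball_aux[OF I \<rho>] s
    by (simp add: B_def E_def \<mu>_def s_def mult.assoc ennreal_mult' less_imp_le)
qed

lemma ellipsoid_covering_card_ge:
  fixes lam :: "'i \<Rightarrow> real" and Bs :: "('i \<Rightarrow> real) set"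
  assumes I: "finite I" and Bs: "finite Bs" and lam: "\<And>i. i \<in> I \<Longrightarrow> lam i > 0"
    and r: "r > 0"
    and cover: "\<And>a. (\<Sum>i\<in>I. (a i)\<^sup>2 / lam i) < 1 \<Longrightarrow> \<exists>b\<in>Bs. (\<Sum>i\<in>I. (a i - b i)\<^sup>2) < r\<^sup>2"
  shows "(\<Prod>i\<in>I. sqrt (lam i)) \<le> real (card Bs) * (2 * r) ^ card I"
proof -
  define \<mu> where "\<mu> = PiM I (\<lambda>_. lborel::real measure)"
  define V where "V = unit_ball_vol (card I)"
  \<comment> \<open>the closed ellipsoid of half size lies inside the open one, whence the factor 2\<close>
  define E where "E = {x. (\<Sum>i\<in>I. (x i)\<^sup>2 / lam i) \<le> (1/2)\<^sup>2} \<inter> space \<mu>"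
  define S where "S b = {x. sqrt (\<Sum>i\<in>I. (x i - b i)\<^sup>2) \<le> r} \<inter> space \<mu>" for b
  have V: "V > 0" by (simp add: V_def)
  have S: "S b \<in> sets \<mu>" for b
    unfolding S_def \<mu>_def by measurable
  have "E \<subseteq> (\<Union>b\<in>Bs. S b)"
  proof
    fix x assume x: "x \<in> E"
    then have "(\<Sum>i\<in>I. (x i)\<^sup>2 / lam i) < 1" by (simp add: E_def power_divide)
    then obtain b where "b \<in> Bs" "(\<Sum>i\<in>I. (x i - b i)\<^sup>2) < r\<^sup>2" using cover by blast
    then show "x \<in> (\<Union>b\<in>Bs. S b)"
      using x r by (force simp: S_def E_def real_sqrt_le_iff' sum_nonneg)
  qed
  then have "emeasure \<mu> E \<le> emeasure \<mu> (\<Union>b\<in>Bs. S b)"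
    using S Bs by (intro emeasure_mono) auto
  also have "\<dots> \<le> (\<Sum>b\<in>Bs. emeasure \<mu> (S b))"
    using S Bs by (intro emeasure_subadditive_finite) auto
  also have "\<dots> = ennreal (real (card Bs) * (V * r ^ card I))"
    using emeasure_PiM_lborel_cball[OF I r] V r
    by (simp add: S_def \<mu>_def V_def ennreal_of_nat_eq_real_of_nat ennreal_mult')
  finally have "(\<Prod>i\<in>I. sqrt (lam i)) * V * (1/2) ^ card I \<le> real (card Bs) * (V * r ^ card I)"
    using emeasure_PiM_lborel_ellipsoid[OF I lam, where \<rho> = "1/2"] V r
    by (simp add: E_def \<mu>_def V_def ennreal_le_iff)
  then have "((\<Prod>i\<in>I. sqrt (lam i)) / 2 ^ card I) * V \<le> (real (card Bs) * r ^ card I) * V"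
    by (simp add: field_simps power_one_over)
  then show ?thesis
    using V by (simp add: power_mult_distrib field_simps)
qed

lemma bessel_inequality:
  fixes h :: "'a \<Rightarrow> real" and \<phi> :: "nat \<Rightarrow> 'a \<Rightarrow> real"
  assumes J: "finite J"
    and orthonormal: "\<And>i j. i \<in> J \<Longrightarrow> j \<in> J \<Longrightarrow> (\<integral>x. \<phi> i x * \<phi> j x \<partial>M) = (if i = j then 1 else 0)"
    and "integrable M (\<lambda>x. (h x)\<^sup>2)" "\<And>i. integrable M (\<lambda>x. h x * \<phi> i x)"
    "\<And>i j. integrable M (\<lambda>x. \<phi> i x * \<phi> j x)"
  shows "(\<Sum>i\<in>J. (\<integral>x. h x * \<phi> i x \<partial>M)\<^sup>2) \<le> (\<integral>x. (h x)\<^sup>2 \<partial>M)"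
proof -
  define d where "d i = (\<integral>x. h x * \<phi> i x \<partial>M)" for i
  have expand: "(\<lambda>x. (h x - (\<Sum>i\<in>J. d i * \<phi> i x))\<^sup>2) = (\<lambda>x. ((h x)\<^sup>2 -
      2 * (\<Sum>i\<in>J. d i * (h x * \<phi> i x))) + (\<Sum>i\<in>J. \<Sum>j\<in>J. d i * d j * (\<phi> i x * \<phi> j x)))"
    by (auto simp: power2_diff power2_eq_square sum_product sum_distrib_left algebra_simps)
  have diag: "(\<Sum>i\<in>J. \<Sum>j\<in>J. d i * d j * (if i = j then 1 else 0)) = (\<Sum>i\<in>J. d i * d i)"
    using J by (simp add: if_distrib cong: if_cong)
  have "0 \<le> (\<integral>x. (h x - (\<Sum>i\<in>J. d i * \<phi> i x))\<^sup>2 \<partial>M)" by simp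
  also have "\<dots> = (\<integral>x. (h x)\<^sup>2 \<partial>M) - 2 * (\<Sum>i\<in>J. d i * d i) +
      (\<Sum>i\<in>J. \<Sum>j\<in>J. d i * d j * (if i = j then 1 else 0))"
    unfolding expand using assms
    by (simp add: integral_add integral_diff integral_sum integrable_sum d_def)
  finally have "(\<Sum>i\<in>J. d i * d i) \<le> (\<integral>x. (h x)\<^sup>2 \<partial>M)"
    unfolding diag by simp
  then show ?thesis by (simp add: d_def power2_eq_square)
qed

lemma finite_combination_in_rkhs_ball:
  assumes J: "finite J" and norm: "(\<Sum>i\<in>J. (a i)\<^sup>2 / lam i) < 1"
  shows "(\<lambda>x. \<Sum>i\<in>J. a i * \<phi> i x) \<in> rkhs_ball \<Omega> \<phi> lam"
proof -
  define a' where "a' i = (if i \<in> J then a i else 0)" for i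
  have "(\<lambda>i. (a' i)\<^sup>2 / lam i) sums (\<Sum>i\<in>J. (a' i)\<^sup>2 / lam i)"
    by (rule sums_finite[OF J]) (simp add: a'_def)
  then have norm_sums: "(\<lambda>i. (a' i)\<^sup>2 / lam i) sums (\<Sum>i\<in>J. (a i)\<^sup>2 / lam i)"
    by (simp add: a'_def)
  have "(\<lambda>i. a' i * \<phi> i x) sums (\<Sum>i\<in>J. a' i * \<phi> i x)" for x
    by (rule sums_finite[OF J]) (simp add: a'_def)
  then have "(\<lambda>i. a' i * \<phi> i x) sums (\<Sum>i\<in>J. a i * \<phi> i x)" for x
    by (simp add: a'_def)
  with norm_sums norm show ?thesis
    unfolding rkhs_ball_def by (auto simp: sums_iff)
qed

lemma H_ext_ge_ln_card:
  assumes "\<And>Cs. finite Cs \<Longrightarrow> ext_cover \<Omega> \<epsilon> A Cs \<Longrightarrow> y \<le> ln (card Cs)"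
  shows "ereal y \<le> H_ext \<epsilon> A \<Omega>"
proof (cases "\<exists>Cs. finite Cs \<and> ext_cover \<Omega> \<epsilon> A Cs")
  case True
  define m where "m = (LEAST m. \<exists>Cs. finite Cs \<and> card Cs = m \<and> ext_cover \<Omega> \<epsilon> A Cs)"
  have "\<exists>Cs. finite Cs \<and> card Cs = m \<and> ext_cover \<Omega> \<epsilon> A Cs"
    unfolding m_def by (rule LeastI_ex) (use True in blast)
  then have "y \<le> ln (real m)"
    using assms by blast
  then show ?thesis
    using True by (simp add: H_ext_def m_def)
qed (auto simp: H_ext_def)

locale continuous_orthonormal_system = finite_measure \<nu>
  for \<nu> :: "'a::topological_space measure" +
  fixes \<Omega> :: "'a set" and \<phi> :: "nat \<Rightarrow> 'a \<Rightarrow> real"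
  assumes compact_domain: "compact \<Omega>"
    and sets_eq: "sets \<nu> = sets (restrict_space borel \<Omega>)"
    and continuous_basis: "\<And>i. continuous_on \<Omega> (\<phi> i)"
    and orthonormal: "\<And>i j. (\<integral>x. \<phi> i x * \<phi> j x \<partial>\<nu>) = (if i = j then 1 else 0)"
begin

lemma space_eq: "space \<nu> = \<Omega>"
  using sets_eq_imp_space_eq[OF sets_eq] by (simp add: space_restrict_space)

lemma integrable_continuous:
  fixes g :: "'a \<Rightarrow> real"
  assumes "continuous_on \<Omega> g"
  shows "integrable \<nu> g"
proof -
  have "g \<in> borel_measurable \<nu>"
    by (subst measurable_cong_sets[OF sets_eq refl])
      (rule borel_measurable_continuous_on_restrict[OF assms])
  moreover obtain B where "\<And>x. x \<in> \<Omega> \<Longrightarrow> norm (g x) \<le> B"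
    using compact_imp_bounded[OF compact_continuous_image[OF assms compact_domain]]
    by (auto simp: bounded_iff)
  ultimately show ?thesis
    by (intro integrable_const_bound[where B=B] AE_I2) (auto simp: space_eq)
qed

lemma measure_space_pos: "measure \<nu> (space \<nu>) > 0"
proof (rule ccontr)
  assume "\<not> measure \<nu> (space \<nu>) > 0"
  then have "emeasure \<nu> (space \<nu>) = 0"
    using measure_nonneg[of \<nu> "space \<nu>"] by (simp add: emeasure_eq_measure)
  then have "space \<nu> \<in> null_sets \<nu>"
    by auto
  then have "AE x in \<nu>. \<phi> 0 x * \<phi> 0 x = 0"
    by (rule AE_I') auto
  then have "(\<integral>x. \<phi> 0 x * \<phi> 0 x \<partial>\<nu>) = 0"
    by (rule integral_eq_zero_AE)
  then show False
    using orthonormal[of 0 0] by simp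
qed

lemma abs_le_sup_dist:
  fixes f c :: "'a \<Rightarrow> real"
  assumes "continuous_on \<Omega> f" "continuous_on \<Omega> c" "x \<in> \<Omega>"
  shows "\<bar>f x - c x\<bar> \<le> sup_dist \<Omega> f c"
proof -
  have "bdd_above ((\<lambda>x. \<bar>f x - c x\<bar>) ` \<Omega>)"
    by (intro bounded_imp_bdd_above compact_imp_bounded compact_continuous_image
        compact_domain continuous_intros assms(1,2))
  then show ?thesis
    unfolding sup_dist_def using assms(3) by (rule cSUP_upper2) simp
qed

lemma integral_square_le_sup_dist:
  fixes f c :: "'a \<Rightarrow> real"
  assumes f: "continuous_on \<Omega> f" and c: "continuous_on \<Omega> c"
  shows "(\<integral>x. (f x - c x)\<^sup>2 \<partial>\<nu>) \<le> measure \<nu> (space \<nu>) * (sup_dist \<Omega> f c)\<^sup>2"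
proof -
  have "(\<integral>x. (f x - c x)\<^sup>2 \<partial>\<nu>) \<le> (\<integral>x. (sup_dist \<Omega> f c)\<^sup>2 \<partial>\<nu>)"
    using abs_le_sup_dist[OF f c]
    by (intro integral_mono integrable_continuous continuous_intros f c)
      (auto simp: space_eq abs_le_square_iff[symmetric] intro: order_trans[OF _ abs_ge_self])
  then show ?thesis by simp
qed

lemma integral_finite_combination_basis:
  assumes "finite J" "i \<in> J"
  shows "(\<integral>x. (\<Sum>j\<in>J. a j * \<phi> j x) * \<phi> i x \<partial>\<nu>) = a i"
proof -
  have "(\<integral>x. (\<Sum>j\<in>J. a j * \<phi> j x) * \<phi> i x \<partial>\<nu>) = (\<Sum>j\<in>J. a j * (\<integral>x. \<phi> j x * \<phi> i x \<partial>\<nu>))"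
    by (simp add: sum_distrib_right mult.assoc integrable_continuous continuous_intros
        continuous_basis)
  also have "\<dots> = a i"
    using assms by (simp add: orthonormal if_distrib cong: if_cong)
  finally show ?thesis .
qed

lemma ext_cover_coefficient_cover:
  assumes cover: "ext_cover \<Omega> \<eta> (rkhs_ball \<Omega> \<phi> lam) Cs"
    and J: "finite J" and a: "(\<Sum>i\<in>J. (a i)\<^sup>2 / lam i) < 1"
  shows "\<exists>c\<in>Cs. (\<Sum>i\<in>J. (a i - (\<integral>x. c x * \<phi> i x \<partial>\<nu>))\<^sup>2) < measure \<nu> (space \<nu>) * \<eta>\<^sup>2"
proof -
  define f where "f x = (\<Sum>i\<in>J. a i * \<phi> i x)" for x
  have f: "continuous_on \<Omega> f"
    unfolding f_def by (intro continuous_intros continuous_basis)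
  have "f \<in> rkhs_ball \<Omega> \<phi> lam"
    unfolding f_def by (rule finite_combination_in_rkhs_ball[OF J a])
  then obtain c where "c \<in> Cs" and c: "continuous_on \<Omega> c" and close: "sup_dist \<Omega> f c < \<eta>"
    using cover unfolding ext_cover_def by blast
  have coeff: "(\<integral>x. (f x - c x) * \<phi> i x \<partial>\<nu>) = a i - (\<integral>x. c x * \<phi> i x \<partial>\<nu>)" if "i \<in> J" for i
    using integral_finite_combination_basis[OF J that, of a]
    by (simp add: left_diff_distrib f_def integrable_continuous continuous_intros c continuous_basis)
  have "(\<Sum>i\<in>J. (a i - (\<integral>x. c x * \<phi> i x \<partial>\<nu>))\<^sup>2) = (\<Sum>i\<in>J. (\<integral>x. (f x - c x) * \<phi> i x \<partial>\<nu>)\<^sup>2)"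
    by (simp add: coeff)
  also have "\<dots> \<le> (\<integral>x. (f x - c x)\<^sup>2 \<partial>\<nu>)"
    by (intro bessel_inequality J orthonormal integrable_continuous continuous_intros f c
        continuous_basis)
  also have "\<dots> \<le> measure \<nu> (space \<nu>) * (sup_dist \<Omega> f c)\<^sup>2"
    by (rule integral_square_le_sup_dist[OF f c])
  also have "\<dots> < measure \<nu> (space \<nu>) * \<eta>\<^sup>2"
  proof -
    obtain x where "x \<in> \<Omega>"
      using measure_space_pos space_eq by fastforce
    then have "0 \<le> sup_dist \<Omega> f c"
      using abs_le_sup_dist[OF f c] by (meson abs_ge_zero order_trans)
    then show ?thesis
      using close measure_space_pos by (intro mult_strict_left_mono power_strict_mono) auto
  qed
  finally show ?thesis
    using \<open>c \<in> Cs\<close> by blast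
qed

lemma ext_cover_card_ge:
  assumes Cs: "finite Cs" and cover: "ext_cover \<Omega> \<eta> (rkhs_ball \<Omega> \<phi> lam) Cs"
    and J: "finite J" and lam: "\<And>i. i \<in> J \<Longrightarrow> lam i > 0" and \<eta>: "\<eta> > 0"
  shows "(\<Prod>i\<in>J. sqrt (lam i)) \<le> real (card Cs) * (2 * sqrt (measure \<nu> (space \<nu>)) * \<eta>) ^ card J"
proof -
  define coeff where "coeff c = (\<lambda>i. \<integral>x. c x * \<phi> i x \<partial>\<nu>)" for c :: "'a \<Rightarrow> real"
  define r where "r = sqrt (measure \<nu> (space \<nu>)) * \<eta>"
  have r: "r > 0"
    using measure_space_pos \<eta> by (simp add: r_def)
  have "(\<Prod>i\<in>J. sqrt (lam i)) \<le> real (card (coeff ` Cs)) * (2 * r) ^ card J"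
  proof (rule ellipsoid_covering_card_ge[OF J finite_imageI[OF Cs] lam r])
    fix a assume "(\<Sum>i\<in>J. (a i)\<^sup>2 / lam i) < 1"
    then show "\<exists>b\<in>coeff ` Cs. (\<Sum>i\<in>J. (a i - b i)\<^sup>2) < r\<^sup>2"
      using ext_cover_coefficient_cover[OF cover J] measure_space_pos
      by (auto simp: coeff_def r_def power_mult_distrib)
  qed
  also have "\<dots> \<le> real (card Cs) * (2 * r) ^ card J"
    using card_image_le[OF Cs, of coeff] r by (intro mult_right_mono) auto
  finally show ?thesis
    by (simp add: r_def mult.assoc)
qed

lemma entropyE_le_ln_card:
  assumes Cs: "finite Cs" and cover: "ext_cover \<Omega> (\<epsilon> / 2) (rkhs_ball \<Omega> \<phi> lam) Cs"
    and lam: "\<And>i. lam i > 0" and \<epsilon>: "\<epsilon> > 0" and \<delta>: "measure \<nu> (space \<nu>) * \<epsilon>\<^sup>2 < \<delta>"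
  shows "entropyE \<delta> lam / 4 \<le> ln (card Cs)"
proof (cases "finite {i. \<delta> < lam i}")
  case False
  \<comment> \<open>then \<open>entropyE\<close> is a sum over an infinite set, hence 0 by convention\<close>
  then show ?thesis
    by (cases "card Cs = 0") (auto simp: entropyE_def)
next
  case J: True
  define \<rho> where "\<rho> = measure \<nu> (space \<nu>) * \<epsilon>\<^sup>2"
  have \<rho>: "\<rho> > 0"
    using measure_space_pos \<epsilon> by (simp add: \<rho>_def)
  have "(\<Prod>i\<in>{i. \<delta> < lam i}. sqrt (lam i)) \<le> real (card Cs) * sqrt \<rho> ^ card {i. \<delta> < lam i}"
    using ext_cover_card_ge[OF Cs cover J lam] \<epsilon> measure_space_pos
    by (simp add: \<rho>_def real_sqrt_mult)
  then have "(\<Prod>i\<in>{i. \<delta> < lam i}. sqrt (lam i / \<rho>)) \<le> real (card Cs)"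
    using \<rho> by (simp add: real_sqrt_divide prod_dividef pos_divide_le_eq)
  moreover have pos: "sqrt (lam i / \<rho>) > 0" for i
    using lam \<rho> by simp
  ultimately have "ln (\<Prod>i\<in>{i. \<delta> < lam i}. sqrt (lam i / \<rho>)) \<le> ln (card Cs)"
    by (intro ln_mono prod_pos) auto
  moreover have "ln (\<Prod>i\<in>{i. \<delta> < lam i}. sqrt (lam i / \<rho>))
      = (\<Sum>i\<in>{i. \<delta> < lam i}. ln (sqrt (lam i / \<rho>)))"
    using pos by (intro ln_prod J) (metis less_irrefl)
  moreover have "ln (lam i / \<delta>) / 4 \<le> ln (sqrt (lam i / \<rho>))" if "\<delta> < lam i" for i
  proof -
    have "0 \<le> ln (lam i / \<delta>)"
      using that \<delta> \<rho> by (simp add: \<rho>_def)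
    moreover have "ln (lam i / \<delta>) \<le> ln (lam i / \<rho>)"
      using that \<delta> \<rho> lam[of i] by (intro ln_mono divide_left_mono) (auto simp: \<rho>_def)
    ultimately show ?thesis
      using lam[of i] \<rho> by (simp add: ln_sqrt)
  qed
  moreover have "entropyE \<delta> lam / 4 = (\<Sum>i\<in>{i. \<delta> < lam i}. ln (lam i / \<delta>) / 4)"
    unfolding entropyE_def sum_divide_distrib ..
  ultimately show ?thesis
    using sum_mono[of "{i. \<delta> < lam i}" "\<lambda>i. ln (lam i / \<delta>) / 4" "\<lambda>i. ln (sqrt (lam i / \<rho>))"]
    by simp
qed

end

theorem theorem2:
  shows "\<exists>C>0. \<forall>n \<Omega> \<nu> K \<phi> lam \<epsilon> \<delta>s.
     kernel_setting n \<Omega> \<nu> K \<phi> lam \<and> \<epsilon> > 0 \<and>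
     \<delta>s \<in> delta_set C \<nu> \<epsilon> lam \<and> (\<forall>\<delta>\<in>delta_set C \<nu> \<epsilon> lam. \<delta>s \<le> \<delta>)
     \<longrightarrow> H_ext (\<epsilon> / 2) (rkhs_ball \<Omega> \<phi> lam) \<Omega> \<ge> ereal (entropyE \<delta>s lam / 4)"
proof (intro exI[of _ "1::real"] conjI allI impI)
  fix n \<Omega> \<nu> K \<phi> lam \<epsilon> \<delta>s
  assume "kernel_setting n \<Omega> \<nu> K \<phi> lam \<and> \<epsilon> > 0 \<and>
     \<delta>s \<in> delta_set 1 \<nu> \<epsilon> lam \<and> (\<forall>\<delta>\<in>delta_set 1 \<nu> \<epsilon> lam. \<delta>s \<le> \<delta>)"
  then have setting: "kernel_setting n \<Omega> \<nu> K \<phi> lam" and \<epsilon>: "\<epsilon> > 0"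
    and \<delta>s: "measure \<nu> (space \<nu>) * \<epsilon>\<^sup>2 < \<delta>s"
    by (auto simp: delta_set_def)
  then interpret continuous_orthonormal_system \<nu> \<Omega> \<phi>
    by (intro continuous_orthonormal_system.intro continuous_orthonormal_system_axioms.intro)
      (auto simp: kernel_setting_def)
  have lam: "\<And>i. lam i > 0"
    using setting by (simp add: kernel_setting_def)
  show "H_ext (\<epsilon> / 2) (rkhs_ball \<Omega> \<phi> lam) \<Omega> \<ge> ereal (entropyE \<delta>s lam / 4)"
    using entropyE_le_ln_card[OF _ _ lam \<epsilon> \<delta>s] by (intro H_ext_ge_ln_card)
qed simp

end
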